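(* Let $p$ be an odd prime and let $n,s$ be positive integers such that $2n/s\geq 3$ is an odd integer; put $q=p^n$, $d=p^s$, and $f(X)=X^{d+1}\in\mathbb{F}_{q^2}[X]$. Then the graph $\mathcal{A}_{q^2,d}$ is isomorphic to the subgraph of $G_f$ induced by the vertex set $\mathbb{F}_{q^2}\times\mathbb{F}_{q^2}$ (the points $(x,y)$ of $\Pi_f$).
   Context: The map $x\mapsto x^d+x$ is a bijection of $\mathbb{F}_{q^2}$. The graph $\mathcal{A}_{q^2,d}$ has vertex set $\mathbb{F}_{q^2}\times\mathbb{F}_{q^2}$; writing vertices as $(a^d+a,x)$ and $(b^d+b,y)$ with $a,b,x,y\in\mathbb{F}_{q^2}$ (uniquely), two distinct vertices are adjacent iff $a^db+ab^d=x+y$. The graph $G_f$ is the orthogonal polarity graph of the plane $\Pi_f$ over $\mathbb{F}_{q^2}$; on its vertices of the form $(x,y)$ with $x,y\in\mathbb{F}_{q^2}$, two distinct vertices $(x_1,y_1)$ and $(x_2,y_2)$ are adjacent iff $f(x_1+x_2)=y_1+y_2$. *)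

theory Defs
  imports "HOL-Computational_Algebra.Primes"
begin

definition A_adj :: "nat \<Rightarrow> ('a::field \<times> 'a) \<Rightarrow> ('a \<times> 'a) \<Rightarrow> bool" where
  "A_adj d u v \<longleftrightarrow> u \<noteq> v \<and>
     (\<exists>a b. a ^ d + a = fst u \<and> b ^ d + b = fst v \<and>
            a ^ d * b + a * b ^ d = snd u + snd v)"

definition G_adj :: "('a::field \<Rightarrow> 'a) \<Rightarrow> ('a \<times> 'a) \<Rightarrow> ('a \<times> 'a) \<Rightarrow> bool" where
  "G_adj f u v \<longleftrightarrow> u \<noteq> v \<and> f (fst u + fst v) = snd u + snd v"

definition graph_iso :: "('v \<Rightarrow> 'v \<Rightarrow> bool) \<Rightarrow> ('w \<Rightarrow> 'w \<Rightarrow> bool) \<Rightarrow> bool" where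
  "graph_iso E1 E2 \<longleftrightarrow> (\<exists>\<sigma>. bij \<sigma> \<and> (\<forall>u v. E1 u v \<longleftrightarrow> E2 (\<sigma> u) (\<sigma> v)))"

end

theory Submission
  imports Defs "HOL-Number_Theory.Residues"
begin

text \<open>Put \<open>h a = a ^ d + a\<close>. Writing the vertices of \<open>A_adj d\<close> as \<open>(h a, x)\<close> and
  sending \<open>(h a, x)\<close> to \<open>(a, x + a ^ (d + 1))\<close> gives the isomorphism, because additivity of
  \<open>X \<mapsto> X ^ d\<close> yields \<open>(a + b) ^ (d + 1) = a ^ (d + 1) + b ^ (d + 1) + (a ^ d * b + a * b ^ d)\<close>.
  That \<open>h\<close> is a bijection of the field with \<open>d ^ m\<close> elements, \<open>m = 2n/s\<close> odd, comes from
  iterating: \<open>h a = h b\<close> makes \<open>c = a - b\<close> satisfy \<open>c ^ d = - c\<close>, hence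
  \<open>c = c ^ d ^ m = (-1) ^ m * c = - c\<close>, and the characteristic is odd.\<close>

lemma graph_isoI_common_parametrization:
  assumes "bij \<alpha>" and "bij \<beta>" and "\<And>u v. E1 (\<alpha> u) (\<alpha> v) \<longleftrightarrow> E2 (\<beta> u) (\<beta> v)"
  shows "graph_iso E1 E2"
  unfolding graph_iso_def
proof (intro exI conjI allI)
  show "bij (\<beta> \<circ> inv_into UNIV \<alpha>)"
    using assms(1,2) by (simp add: bij_comp bij_imp_bij_inv)
  show "E1 u v \<longleftrightarrow> E2 ((\<beta> \<circ> inv_into UNIV \<alpha>) u) ((\<beta> \<circ> inv_into UNIV \<alpha>) v)" for u v
    using assms(3)[of "inv_into UNIV \<alpha> u" "inv_into UNIV \<alpha> v"] assms(1)
    by (simp add: bij_is_surj surj_f_inv_f)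
qed

lemma A_adj_image_iff:
  fixes a b x y :: "'a::field"
  assumes "inj (\<lambda>a::'a. a ^ d + a)"
  shows "A_adj d (a ^ d + a, x) (b ^ d + b, y) \<longleftrightarrow>
           (a ^ d + a, x) \<noteq> (b ^ d + b, y) \<and> a ^ d * b + a * b ^ d = x + y"
  using assms unfolding A_adj_def by (auto dest: injD)

lemma add_power_Suc_if_additive:
  fixes a b :: "'a::comm_semiring_1"
  assumes "(a + b) ^ d = a ^ d + b ^ d"
  shows "(a + b) ^ (d + 1) = a ^ (d + 1) + b ^ (d + 1) + (a ^ d * b + a * b ^ d)"
  using assms by (simp add: algebra_simps)

lemma graph_iso_A_adj_G_adj:
  fixes d :: nat
  assumes bij_h: "bij (\<lambda>a::'a::field. a ^ d + a)"
    and additive: "\<And>x y::'a. (x + y) ^ d = x ^ d + y ^ d"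
  shows "graph_iso (A_adj d :: 'a \<times> 'a \<Rightarrow> _) (G_adj (\<lambda>X::'a. X ^ (d + 1)))"
proof (rule graph_isoI_common_parametrization)
  let ?\<alpha> = "map_prod (\<lambda>a::'a. a ^ d + a) id"
  let ?\<beta> = "\<lambda>(a::'a, x). (a, x + a ^ (d + 1))"
  show "bij ?\<alpha>"
    using bij_betw_map_prod[OF bij_h bij_id] by simp
  show "bij ?\<beta>"
    by (rule o_bij[where g = "\<lambda>(a, y). (a, y - a ^ (d + 1))"]) (auto simp: fun_eq_iff)
  show "A_adj d (?\<alpha> u) (?\<alpha> v) \<longleftrightarrow> G_adj (\<lambda>X. X ^ (d + 1)) (?\<beta> u) (?\<beta> v)" for u v
  proof -
    obtain a x b y where u: "u = (a, x)" and v: "v = (b, y)" by fastforce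
    have "?\<alpha> u \<noteq> ?\<alpha> v \<longleftrightarrow> u \<noteq> v" and "?\<beta> u \<noteq> ?\<beta> v \<longleftrightarrow> u \<noteq> v"
      using bij_h by (auto simp: u v dest: bij_is_inj injD)
    then show ?thesis
      using A_adj_image_iff[OF bij_is_inj[OF bij_h]] add_power_Suc_if_additive[OF additive]
      by (auto simp: u v G_adj_def algebra_simps)
  qed
qed

lemma power_card_eq_self:
  fixes x :: "'a::{finite,field}"
  shows "x ^ card (UNIV :: 'a set) = x"
proof (cases "x = 0")
  case False
  have "(\<Prod>y\<in>UNIV-{0}. x * y) = x ^ (card (UNIV :: 'a set) - 1) * \<Prod>(UNIV-{0::'a})"
    by (simp add: prod.distrib mult_ac)
  moreover have "(\<Prod>y\<in>UNIV-{0}. x * y) = \<Prod>(UNIV-{0::'a})"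
    by (rule prod.reindex_bij_witness[of _ "\<lambda>y. y / x" "\<lambda>y. x * y"]) (use False in auto)
  moreover have "\<Prod>(UNIV-{0::'a}) \<noteq> 0"
    by (simp add: prod_zero_iff)
  ultimately have "x ^ (card (UNIV :: 'a set) - 1) = 1"
    by (metis mult_cancel_right1)
  moreover have "card (UNIV :: 'a set) = Suc (card (UNIV :: 'a set) - 1)"
    by (simp add: finite_UNIV_card_ge_0)
  ultimately show ?thesis
    by (metis power_Suc mult_1_right)
qed (simp add: finite_UNIV_card_ge_0)

lemma CHAR_eq_if_card_eq_prime_power:
  assumes "prime p" and "card (UNIV :: 'a::{finite,field} set) = p ^ k"
  shows "CHAR('a) = p"
proof -
  have "prime CHAR('a)"
    by (intro prime_CHAR_semidom finite_imp_CHAR_pos) simp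
  moreover have "CHAR('a) dvd p ^ k"
    using CHAR_dvd_CARD assms(2) by metis
  ultimately show ?thesis
    using assms(1) by (metis prime_dvd_power primes_dvd_imp_eq)
qed

lemma power_power_if_power_eq_minus:
  fixes x :: "'a::comm_ring_1"
  assumes "odd d" and "x ^ d = - x"
  shows "x ^ (d ^ k) = (-1) ^ k * x"
proof (induction k)
  case (Suc k)
  have "x ^ (d ^ Suc k) = (x ^ (d ^ k)) ^ d"
    by (simp only: power_Suc2 power_mult)
  also have "\<dots> = (-1) ^ k * x ^ d"
    using Suc assms(1)
    by (simp add: power_mult_distrib flip: power_mult) (simp add: power_mult mult.commute[of k])
  finally show ?case
    using assms(2) by simp
qed simp

lemma inj_power_plus_self:
  fixes p s m :: nat
  assumes "prime p" and "odd p" and "odd m"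
    and "card (UNIV :: 'a::{finite,field} set) = (p ^ s) ^ m"
  shows "inj (\<lambda>a::'a. a ^ p ^ s + a)"
proof (rule injI)
  fix a b :: 'a
  assume eq: "a ^ p ^ s + a = b ^ p ^ s + b"
  define c where "c = a - b"
  have char: "CHAR('a) = p"
    using assms(1,4)
    by (intro CHAR_eq_if_card_eq_prime_power[where k = "s * m"]) (simp_all add: power_mult)
  have odd_d: "odd (p ^ s)"
    using assms(2) by simp
  have "c ^ p ^ s = a ^ p ^ s - b ^ p ^ s"
    unfolding c_def using freshmans_dream'[where x = a and y = "- b" and n = s] assms(1) char odd_d
    by simp
  also have "\<dots> = - c"
    using eq unfolding c_def by (metis add_diff_cancel_left add_diff_cancel_right minus_diff_eq)
  finally have "c ^ p ^ s = - c" .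
  then have "c ^ (p ^ s) ^ m = (-1) ^ m * c"
    by (rule power_power_if_power_eq_minus[OF odd_d])
  then have "c + c = 0"
    using power_card_eq_self[of c] assms(3,4) by simp
  moreover have "\<not> CHAR('a) dvd 2"
    using char assms(1,2) prime_ge_2_nat[of p] dvd_imp_le[of p 2] by auto
  then have "(2::'a) \<noteq> 0"
    using of_nat_eq_0_iff_char_dvd[where 'a = 'a and n = 2] by simp
  ultimately show "a = b"
    unfolding c_def by (simp flip: mult_2)
qed

theorem lemma6:
  fixes p n s :: nat
  assumes "prime p" and "odd p" and "n > 0" and "s > 0"
    and "s dvd 2 * n" and "odd (2 * n div s)" and "2 * n div s \<ge> 3"
    and "card (UNIV :: 'a::{finite,field} set) = (p ^ n) ^ 2"
  shows "graph_iso (A_adj (p ^ s) :: 'a \<times> 'a \<Rightarrow> _)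
                   (G_adj (\<lambda>X::'a. X ^ (p ^ s + 1)))"
proof (rule graph_iso_A_adj_G_adj)
  have card: "card (UNIV :: 'a set) = (p ^ s) ^ (2 * n div s)"
    using assms(5,8) by (simp add: mult.commute flip: power_mult)
  show "bij (\<lambda>a::'a. a ^ p ^ s + a)"
    using inj_power_plus_self[OF assms(1,2,6) card]
    by (simp add: finite_UNIV_inj_surj bij_def)
  show "(x + y) ^ p ^ s = x ^ p ^ s + y ^ p ^ s" for x y :: 'a
    using freshmans_dream'[where 'a = 'a and n = s] assms(1)
      CHAR_eq_if_card_eq_prime_power[OF assms(1) assms(8)[folded power_mult]] by simp
qed

end
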